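(* Fix $a\in\mathbb{R}$. For delays $T>0$ with $aT<1$, let $k_u(T)$ denote the unique solution $k>|a|$ of $$T\sqrt{k^2-a^2}=\arccos\!\left(\frac{a}{k}\right).$$ Then $T\mapsto k_u(T)$ is decreasing and convex. Moreover, if $a>0$ then $$\lim_{T\to 1/a}k_u(T)=a,\qquad \lim_{T\to0^+}k_u(T)=+\infty,$$ and if $a<0$ then $$\lim_{T\to+\infty}k_u(T)=|a|,\qquad \lim_{T\to0^+}k_u(T)=+\infty .$$
   Context: Consider the scalar retarded system $\dot x(t)=a x(t)-k x(t-T)$ with $a,k\in\mathbb{R}$ and constant delay $T>0$. For $aT<1$, the set of gains $k$ for which this system is exponentially stable is exactly the open interval $(a,k_u)$, where $k_u$ is defined as in the claim. *)

theory Defs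
  imports "HOL-Analysis.Analysis"
begin

definition delay_dom :: "real \<Rightarrow> real set" where
  "delay_dom a = {T. 0 < T \<and> a * T < 1}"

definition ku :: "real \<Rightarrow> real \<Rightarrow> real" where
  "ku a T = (THE k. \<bar>a\<bar> < k \<and> T * sqrt (k^2 - a^2) = arccos (a / k))"

end

theory Submission
  imports Defs
begin

text \<open>
  For \<open>|a| < k\<close> the delay at which the gain \<open>k\<close> becomes critical,
  \<open>arccos (a / k) / sqrt (k\<^sup>2 - a\<^sup>2)\<close>, is the integral of \<open>1 / (k + a sin t)\<close> over
  \<open>[0, \<pi>/2]\<close>. Each integrand is strictly decreasing and convex in \<open>k\<close>, hence so is the critical
  delay. It tends to \<open>0\<close> as \<open>k \<rightarrow> \<infinity>\<close>, and to \<open>1 / a\<close> (if \<open>a > 0\<close>) or \<open>\<infinity>\<close> (if \<open>a \<le> 0\<close>)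
  as \<open>k \<rightarrow> |a|\<close>, so it maps \<open>(|a|, \<infinity>)\<close> onto the admissible delays. The critical gain \<open>k\<^sub>u\<close>
  is its inverse, and the inverse of a strictly decreasing convex function is again decreasing and
  convex. The limits of \<open>k\<^sub>u\<close> follow by comparing the critical delay with \<open>1 / k\<close>,
  \<open>\<pi> / (2 sqrt (k\<^sup>2 - a\<^sup>2))\<close> and \<open>\<pi> / (2 (k - |a|))\<close>.
\<close>

lemma sqrt_diff_squares_pos:
  fixes a k :: real
  assumes "\<bar>a\<bar> < k"
  shows "0 < sqrt (k^2 - a^2)"
  using power2_strict_mono[of a k] assms by simp

lemma sin_arccos_div:
  fixes a k :: real
  assumes "\<bar>a\<bar> < k"
  shows "sin (arccos (a / k)) = sqrt (k^2 - a^2) / k"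
proof -
  have k: "0 < k" using assms by linarith
  have "-1 \<le> a / k" "a / k \<le> 1" using assms k by (auto simp: field_simps abs_less_iff)
  then have "sin (arccos (a / k)) = sqrt (1 - (a / k)^2)"
    by (simp add: sin_arccos)
  also have "1 - (a / k)^2 = (k^2 - a^2) / k^2"
    using k by (simp add: field_simps)
  finally show ?thesis using k by (simp add: real_sqrt_divide)
qed

lemma abs_mult_sin_le: "\<bar>a * sin t\<bar> \<le> \<bar>a\<bar>" for a t :: real
  by (simp add: abs_mult mult_left_le)

lemma mult_cos_less_sin:
  fixes t :: real
  assumes "0 < t" "t < pi / 2"
  shows "t * cos t < sin t"
proof -
  have "((\<lambda>t. sin t - t * cos t) has_real_derivative z * sin z) (at z)" for z
    by (auto intro!: derivative_eq_intros simp: algebra_simps)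
  then obtain z where z: "0 < z" "z < t" and eq: "sin t - t * cos t = t * (z * sin z)"
    using MVT2[of 0 t "\<lambda>t. sin t - t * cos t" "\<lambda>z. z * sin z"] assms(1) by auto
  have "0 < sin z"
    using z assms by (intro sin_gt_zero) auto
  then have "0 < t * (z * sin z)"
    using z assms(1) by simp
  with eq show ?thesis
    by linarith
qed

lemma one_div_add_diff_ge:
  fixes x b k1 k2 :: real
  assumes "\<bar>x\<bar> \<le> b" "b < k1" "k1 < k2"
  shows "(k2 - k1) / ((k1 + b) * (k2 + b)) \<le> 1 / (k1 + x) - 1 / (k2 + x)"
proof -
  have pos: "0 < k1 + x" "0 < k2 + x"
    using assms by auto
  have "(k1 + x) * (k2 + x) \<le> (k1 + b) * (k2 + b)"
    using pos assms by (intro mult_mono) auto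
  then have "(k2 - k1) / ((k1 + b) * (k2 + b)) \<le> (k2 - k1) / ((k1 + x) * (k2 + x))"
    using pos assms by (intro divide_left_mono) auto
  also have "\<dots> = 1 / (k1 + x) - 1 / (k2 + x)"
    using pos by (simp add: field_simps)
  finally show ?thesis .
qed

lemma convex_on_inverse_add:
  fixes c :: real
  shows "convex_on {-c<..} (\<lambda>k. 1 / (k + c))"
  unfolding convex_on_def
proof (intro conjI ballI allI impI convex_real_interval)
  fix x y u v :: real
  assume xy: "x \<in> {-c<..}" "y \<in> {-c<..}" and uv: "0 \<le> u" "0 \<le> v" "u + v = 1"
  have "convex_on {0<..} (inverse :: real \<Rightarrow> real)"
    by (rule convex_on_inverse) auto
  then have "inverse (u *\<^sub>R (x + c) + v *\<^sub>R (y + c)) \<le> u * inverse (x + c) + v * inverse (y + c)"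
    using xy uv unfolding convex_on_def by auto
  moreover have "u *\<^sub>R (x + c) + v *\<^sub>R (y + c) = u *\<^sub>R x + v *\<^sub>R y + (u + v) * c"
    by (simp add: algebra_simps)
  ultimately show "1 / (u *\<^sub>R x + v *\<^sub>R y + c) \<le> u * (1 / (x + c)) + v * (1 / (y + c))"
    using uv by (simp add: divide_inverse)
qed

lemma convex_on_has_integral:
  fixes f :: "'b::real_vector \<Rightarrow> 'a::euclidean_space \<Rightarrow> real"
  assumes "convex K"
    and "\<And>k. k \<in> K \<Longrightarrow> (f k has_integral F k) S"
    and "\<And>s. s \<in> S \<Longrightarrow> convex_on K (\<lambda>k. f k s)"
  shows "convex_on K F"
  unfolding convex_on_def
proof (intro conjI ballI allI impI \<open>convex K\<close>)
  fix x y :: 'b and u v :: real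
  assume xy: "x \<in> K" "y \<in> K" and uv: "0 \<le> u" "0 \<le> v" "u + v = 1"
  have "u *\<^sub>R x + v *\<^sub>R y \<in> K"
    using convexD[OF \<open>convex K\<close> xy uv] .
  then have "(f (u *\<^sub>R x + v *\<^sub>R y) has_integral F (u *\<^sub>R x + v *\<^sub>R y)) S"
    by (rule assms(2))
  moreover have "((\<lambda>s. u * f x s + v * f y s) has_integral u * F x + v * F y) S"
    using assms(2) xy by (intro has_integral_add has_integral_mult_right)
  moreover have "f (u *\<^sub>R x + v *\<^sub>R y) s \<le> u * f x s + v * f y s" if "s \<in> S" for s
    using assms(3)[OF that] xy uv unfolding convex_on_def by blast
  ultimately show "F (u *\<^sub>R x + v *\<^sub>R y) \<le> u * F x + v * F y"
    by (rule has_integral_le)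
qed

lemma convex_on_inverse_of_strict_antimono:
  fixes f g :: "real \<Rightarrow> real"
  assumes "convex D" "convex_on K g" "strict_antimono_on K g"
    and "\<And>T. T \<in> D \<Longrightarrow> f T \<in> K" "\<And>T. T \<in> D \<Longrightarrow> g (f T) = T"
  shows "convex_on D f"
  unfolding convex_on_def
proof (intro conjI ballI allI impI \<open>convex D\<close>)
  fix T1 T2 u v :: real
  assume T: "T1 \<in> D" "T2 \<in> D" and uv: "0 \<le> u" "0 \<le> v" "u + v = 1"
  define m where "m = u * f T1 + v * f T2"
  have "m \<in> K"
    using convexD[OF convex_on_imp_convex[OF assms(2)] assms(4)[OF T(1)] assms(4)[OF T(2)] uv]
    by (simp add: m_def)
  have "u *\<^sub>R T1 + v *\<^sub>R T2 \<in> D"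
    using convexD[OF \<open>convex D\<close> T uv] .
  have "g m \<le> u * g (f T1) + v * g (f T2)"
    using assms(2,4) T uv unfolding convex_on_def m_def by simp
  also have "\<dots> = g (f (u *\<^sub>R T1 + v *\<^sub>R T2))"
    using assms(5) T \<open>u *\<^sub>R T1 + v *\<^sub>R T2 \<in> D\<close> by simp
  finally have "g m \<le> g (f (u *\<^sub>R T1 + v *\<^sub>R T2))" .
  then show "f (u *\<^sub>R T1 + v *\<^sub>R T2) \<le> u * f T1 + v * f T2"
    using monotone_onD[OF assms(3) \<open>m \<in> K\<close> assms(4)[OF \<open>u *\<^sub>R T1 + v *\<^sub>R T2 \<in> D\<close>]]
    unfolding m_def by fastforce
qed

section \<open>The critical delay as an integral\<close>

definition critical_delay :: "real \<Rightarrow> real \<Rightarrow> real" where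
  "critical_delay a k = arccos (a / k) / sqrt (k^2 - a^2)"

text \<open>An antiderivative of \<open>1 / (k + a sin t)\<close>, from the substitution \<open>u = tan (t / 2)\<close>.\<close>

lemma has_real_derivative_arctan_tan_half:
  fixes a k t :: real
  assumes k: "\<bar>a\<bar> < k" and cos: "cos (t / 2) \<noteq> 0"
  defines "w \<equiv> sqrt (k^2 - a^2)"
  shows "((\<lambda>t. 2 / w * arctan ((k * tan (t / 2) + a) / w)) has_real_derivative
           1 / (k + a * sin t)) (at t)"
proof -
  have "0 < k"
    using k by linarith
  have w: "0 < w" "w^2 = k^2 - a^2"
    using sqrt_diff_squares_pos[OF k] power2_strict_mono[of a k] k by (auto simp: w_def)
  define D where "D = k + a * sin t"
  have "0 < D"
    using abs_mult_sin_le[of a t] k unfolding D_def by linarith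
  define c s where "c = cos (t / 2)" and "s = sin (t / 2)"
  have sin_t: "sin t = 2 * s * c"
    using sin_double[of "t / 2"] by (simp add: c_def s_def)
  have "s^2 + c^2 = 1"
    by (simp add: c_def s_def)
  then have key: "w^2 * c^2 + (k * s + a * c)^2 = k * D"
    unfolding w(2) D_def sin_t by algebra
  have deriv: "((\<lambda>t. 2 / w * arctan ((k * tan (t / 2) + a) / w)) has_real_derivative
      2 / w * (inverse (1 + ((k * tan (t / 2) + a) / w)^2) * (k * (inverse (c^2) * (1 / 2)) / w))) (at t)"
    using cos w(1) unfolding c_def by (auto intro!: derivative_eq_intros)
  have one_plus: "1 + ((k * tan (t / 2) + a) / w)^2 = k * D / (w^2 * c^2)"
    using cos w(1) key unfolding c_def s_def tan_def
    by (simp add: field_simps power2_eq_square)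
  have "2 / w * (inverse (1 + ((k * tan (t / 2) + a) / w)^2) * (k * (inverse (c^2) * (1 / 2)) / w))
      = 1 / D"
    using cos w(1) \<open>0 < D\<close> \<open>0 < k\<close> unfolding one_plus c_def
    by (simp add: field_simps power2_eq_square)
  with deriv show ?thesis
    unfolding D_def by (rule DERIV_cong)
qed

lemma arccos_div_eq_arctan_diff:
  fixes a k :: real
  assumes k: "\<bar>a\<bar> < k"
  defines "w \<equiv> sqrt (k^2 - a^2)"
  shows "arccos (a / k) = 2 * (arctan ((k + a) / w) - arctan (a / w))"
proof -
  have "0 < k" "0 < w"
    using k sqrt_diff_squares_pos[OF k] by (auto simp: w_def)
  have "-1 < a / k" "a / k < 1"
    using k \<open>0 < k\<close> by (auto simp: field_simps abs_less_iff)
  define \<theta> where "\<theta> = arccos (a / k)"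
  have \<theta>: "0 < \<theta>" "\<theta> < pi"
    using arccos_lt_bounded[OF \<open>-1 < a / k\<close> \<open>a / k < 1\<close>] by (auto simp: \<theta>_def)
  have cos_\<theta>: "cos \<theta> = a / k" and sin_\<theta>: "sin \<theta> = w / k"
    using \<open>-1 < a / k\<close> \<open>a / k < 1\<close> sin_arccos_div[OF k] by (simp_all add: \<theta>_def w_def)
  have "0 < sin (\<theta> / 2)" "0 < cos (\<theta> / 2)"
    using \<theta> by (auto intro: sin_gt_zero cos_gt_zero_pi)
  have "(k + a) / w = (1 + cos \<theta>) / sin \<theta>"
    using \<open>0 < k\<close> \<open>0 < w\<close> by (simp add: cos_\<theta> sin_\<theta> field_simps)
  also have "\<dots> = cos (\<theta> / 2) / sin (\<theta> / 2)"
    using cos_double_cos[of "\<theta> / 2"] sin_double[of "\<theta> / 2"] \<open>0 < sin (\<theta> / 2)\<close> \<open>0 < cos (\<theta> / 2)\<close>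
    by (simp add: field_simps power2_eq_square)
  also have "\<dots> = tan (pi / 2 - \<theta> / 2)"
    by (simp add: tan_cot' cot_def)
  finally have half: "arctan ((k + a) / w) = pi / 2 - \<theta> / 2"
    using \<theta> by (simp add: arctan_tan)
  have "a / w = tan (pi / 2 - \<theta>)"
    using \<open>0 < k\<close> by (simp add: tan_cot' cot_def cos_\<theta> sin_\<theta>)
  then have "arctan (a / w) = pi / 2 - \<theta>"
    using \<theta> by (simp add: arctan_tan)
  with half show ?thesis
    by (simp add: \<theta>_def)
qed

lemma has_integral_critical_delay:
  fixes a k :: real
  assumes k: "\<bar>a\<bar> < k"
  shows "((\<lambda>t. 1 / (k + a * sin t)) has_integral critical_delay a k) {0..pi / 2}"
proof -
  define w where "w = sqrt (k^2 - a^2)"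
  define G where "G t = 2 / w * arctan ((k * tan (t / 2) + a) / w)" for t
  have "((\<lambda>t. 1 / (k + a * sin t)) has_integral G (pi / 2) - G 0) {0..pi / 2}"
  proof (rule fundamental_theorem_of_calculus)
    fix t assume t: "t \<in> {0..pi / 2}"
    then have "0 \<le> t" "t \<le> pi / 2"
      by simp_all
    then have "cos (t / 2) \<noteq> 0"
      using pi_gt_zero by (intro cos_gt_zero_pi[THEN less_imp_neq, symmetric]) linarith+
    then show "(G has_vector_derivative 1 / (k + a * sin t)) (at t within {0..pi / 2})"
      using has_real_derivative_arctan_tan_half[OF k] unfolding G_def w_def
      by (simp add: has_real_derivative_iff_has_vector_derivative has_vector_derivative_at_within)
  qed simp
  moreover have "G (pi / 2) - G 0 = critical_delay a k"
    using arccos_div_eq_arctan_diff[OF k]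
    by (simp add: G_def w_def critical_delay_def tan_45 diff_divide_distrib)
  ultimately show ?thesis
    by simp
qed

section \<open>Monotonicity, convexity and bounds of the critical delay\<close>

lemma critical_delay_strict_decreasing:
  assumes k1: "\<bar>a\<bar> < k1" and "k1 < k2"
  shows "critical_delay a k2 < critical_delay a k1"
proof -
  define c where "c = (k2 - k1) / ((k1 + \<bar>a\<bar>) * (k2 + \<bar>a\<bar>))"
  have "0 < c"
    using assms unfolding c_def by (intro divide_pos_pos mult_pos_pos) auto
  have diff: "((\<lambda>t. 1 / (k1 + a * sin t) - 1 / (k2 + a * sin t)) has_integral
      critical_delay a k1 - critical_delay a k2) {0..pi / 2}"
    using assms by (intro has_integral_diff has_integral_critical_delay) auto
  have const: "((\<lambda>t. c) has_integral pi / 2 * c) {0..pi / 2}"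
    using has_integral_const_real[of c 0 "pi / 2"] by simp
  have bound: "c \<le> 1 / (k1 + a * sin t) - 1 / (k2 + a * sin t)" for t
    unfolding c_def using assms
    by (intro one_div_add_diff_ge abs_mult_sin_le) auto
  have "pi / 2 * c \<le> critical_delay a k1 - critical_delay a k2"
    using has_integral_le[OF const diff] bound by blast
  moreover have "0 < pi / 2 * c"
    using \<open>0 < c\<close> by simp
  ultimately show ?thesis
    by linarith
qed

lemma convex_on_critical_delay: "convex_on {\<bar>a\<bar><..} (critical_delay a)"
proof (rule convex_on_has_integral)
  show "convex {\<bar>a\<bar><..}"
    by (rule convex_real_interval)
  show "((\<lambda>t. 1 / (k + a * sin t)) has_integral critical_delay a k) {0..pi / 2}"
    if "k \<in> {\<bar>a\<bar><..}" for k
    using that has_integral_critical_delay by simp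
  fix t
  have "{\<bar>a\<bar><..} \<subseteq> {- (a * sin t)<..}"
    using abs_mult_sin_le[of a t] by auto
  then show "convex_on {\<bar>a\<bar><..} (\<lambda>k. 1 / (k + a * sin t))"
    by (rule convex_on_subset[OF convex_on_inverse_add]) (rule convex_real_interval)
qed

lemma isCont_critical_delay:
  assumes k: "\<bar>a\<bar> < k"
  shows "isCont (critical_delay a) k"
proof -
  have "-1 < a / k" "a / k < 1"
    using k by (auto simp: field_simps abs_less_iff)
  then have "isCont (\<lambda>k. arccos (a / k)) k"
    using k by (intro continuous_at_compose[of _ "\<lambda>k. a / k" arccos, unfolded o_def]
      continuous_intros isCont_arccos) auto
  then show ?thesis
    using sqrt_diff_squares_pos[OF k] unfolding critical_delay_def[abs_def]
    by (auto intro!: continuous_intros)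
qed

lemma critical_delay_le:
  assumes "\<bar>a\<bar> < k"
  shows "critical_delay a k \<le> pi / (2 * (k - \<bar>a\<bar>))"
proof -
  have "((\<lambda>t. 1 / (k - \<bar>a\<bar>)) has_integral pi / 2 * (1 / (k - \<bar>a\<bar>))) {0..pi / 2}"
    using has_integral_const_real[of "1 / (k - \<bar>a\<bar>)" 0 "pi / 2"] by simp
  moreover have "1 / (k + a * sin t) \<le> 1 / (k - \<bar>a\<bar>)" for t
    using abs_mult_sin_le[of a t] assms by (intro divide_left_mono) auto
  ultimately have "critical_delay a k \<le> pi / 2 * (1 / (k - \<bar>a\<bar>))"
    using has_integral_le[OF has_integral_critical_delay[OF assms]] by blast
  then show ?thesis
    by simp
qed

lemma inverse_le_critical_delay:
  assumes k: "\<bar>a\<bar> < k"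
  shows "1 / k \<le> critical_delay a k"
proof -
  have "-1 \<le> a / k" "a / k \<le> 1"
    using k by (auto simp: field_simps abs_less_iff)
  then have "sin (arccos (a / k)) \<le> arccos (a / k)"
    by (intro sin_x_le_x arccos_lbound)
  then have "sqrt (k^2 - a^2) / k \<le> arccos (a / k)"
    by (simp add: sin_arccos_div[OF k])
  then show ?thesis
    using k sqrt_diff_squares_pos[OF k] unfolding critical_delay_def
    by (simp add: field_simps)
qed

lemma critical_delay_pos:
  assumes "\<bar>a\<bar> < k"
  shows "0 < critical_delay a k"
proof -
  have "0 < 1 / k"
    using assms by simp
  also have "\<dots> \<le> critical_delay a k"
    by (rule inverse_le_critical_delay[OF assms])
  finally show ?thesis .
qed

lemma critical_delay_ge_of_nonpos:
  assumes k: "\<bar>a\<bar> < k" and "a \<le> 0"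
  shows "pi / 2 / sqrt (k^2 - a^2) \<le> critical_delay a k"
proof -
  have "arccos 0 \<le> arccos (a / k)"
    using assms by (intro arccos_le_arccos) (auto simp: field_simps abs_less_iff)
  then show ?thesis
    using sqrt_diff_squares_pos[OF k] unfolding critical_delay_def
    by (intro divide_right_mono) auto
qed

lemma critical_delay_less_inverse:
  assumes "0 < a" "a < k"
  shows "critical_delay a k < 1 / a"
proof -
  have k: "\<bar>a\<bar> < k"
    using assms by simp
  define t where "t = arccos (a / k)"
  have "0 < a / k" "a / k < 1"
    using assms by (auto simp: field_simps)
  then have "0 < t" "t < pi / 2"
    using arccos_lt_bounded[of "a / k"] arccos_less_arccos[of 0 "a / k"]
    by (auto simp: t_def)
  then have "t * (a / k) < sqrt (k^2 - a^2) / k"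
    using mult_cos_less_sin[of t] \<open>a / k < 1\<close> \<open>0 < a / k\<close> sin_arccos_div[OF k]
    by (simp add: t_def)
  then have "t * a < sqrt (k^2 - a^2)"
    using assms by (simp add: field_simps)
  then show ?thesis
    using assms sqrt_diff_squares_pos[OF k] unfolding critical_delay_def t_def[symmetric]
    by (simp add: field_simps)
qed

lemma critical_delay_eq_iff:
  assumes "\<bar>a\<bar> < k"
  shows "T * sqrt (k^2 - a^2) = arccos (a / k) \<longleftrightarrow> T = critical_delay a k"
  using sqrt_diff_squares_pos[OF assms] unfolding critical_delay_def by (auto simp: field_simps)

lemma critical_delay_inj:
  assumes "\<bar>a\<bar> < k1" "\<bar>a\<bar> < k2" "critical_delay a k1 = critical_delay a k2"
  shows "k1 = k2"
  using assms critical_delay_strict_decreasing[of a k1 k2] critical_delay_strict_decreasing[of a k2 k1]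
  by (cases k1 k2 rule: linorder_cases) auto

section \<open>The critical gain as the inverse of the critical delay\<close>

lemma delay_dom_eq: "delay_dom a = (if 0 < a then {0<..<1 / a} else {0<..})"
proof (cases "0 < a")
  case False
  then have "a * T < 1" if "0 < T" for T
    using mult_nonpos_nonneg[of a T] that by simp
  with False show ?thesis
    by (auto simp: delay_dom_def)
qed (auto simp: delay_dom_def field_simps)

lemma convex_delay_dom: "convex (delay_dom a)"
  by (simp add: delay_dom_eq)

lemma exists_le_critical_delay:
  assumes T: "T \<in> delay_dom a"
  obtains k where "\<bar>a\<bar> < k" "T \<le> critical_delay a k"
proof (cases "0 < a")
  case True
  have "0 < T" "a < 1 / T"
    using T by (auto simp: delay_dom_def field_simps)
  define k where "k = (a + 1 / T) / 2"
  have "\<bar>a\<bar> < k" "k < 1 / T"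
    using True \<open>a < 1 / T\<close> by (auto simp: k_def)
  moreover have "T \<le> 1 / k"
    using \<open>0 < T\<close> \<open>k < 1 / T\<close> \<open>\<bar>a\<bar> < k\<close> by (simp add: field_simps)
  ultimately show ?thesis
    using inverse_le_critical_delay that by fastforce
next
  case False
  have "0 < T"
    using T by (simp add: delay_dom_def)
  define k where "k = sqrt (a^2 + (1 / T)^2)"
  have "sqrt (a^2) < k"
    using \<open>0 < T\<close> unfolding k_def by (intro real_sqrt_less_mono) simp
  then have k: "\<bar>a\<bar> < k"
    by simp
  have "sqrt (k^2 - a^2) = 1 / T"
    using \<open>0 < T\<close> by (simp add: k_def)
  then have "T \<le> pi / 2 / sqrt (k^2 - a^2)"
    using \<open>0 < T\<close> pi_ge_two by simp
  also have "\<dots> \<le> critical_delay a k"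
    using critical_delay_ge_of_nonpos[OF k] False by simp
  finally show ?thesis
    using k that by blast
qed

lemma exists_critical_delay_eq:
  assumes T: "T \<in> delay_dom a"
  obtains k where "\<bar>a\<bar> < k" "critical_delay a k = T"
proof -
  have "0 < T"
    using T by (simp add: delay_dom_def)
  obtain k1 where k1: "\<bar>a\<bar> < k1" "T \<le> critical_delay a k1"
    using exists_le_critical_delay[OF T] .
  define k2 where "k2 = k1 + pi / (2 * T)"
  have "0 < pi / (2 * T)"
    using \<open>0 < T\<close> by simp
  then have "\<bar>a\<bar> < k2" "k1 \<le> k2"
    using k1 by (auto simp: k2_def)
  have "critical_delay a k2 \<le> pi / (2 * (k2 - \<bar>a\<bar>))"
    by (rule critical_delay_le[OF \<open>\<bar>a\<bar> < k2\<close>])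
  also have "\<dots> < T"
  proof -
    have "pi / (2 * T) < k2 - \<bar>a\<bar>"
      using k1 by (simp add: k2_def)
    then have "pi < 2 * T * (k2 - \<bar>a\<bar>)"
      using \<open>0 < T\<close> by (simp add: field_simps)
    then show ?thesis
      using \<open>\<bar>a\<bar> < k2\<close> by (simp add: field_simps)
  qed
  finally obtain k where "k1 \<le> k" "critical_delay a k = T"
    using IVT2[of "critical_delay a" k2 T k1] k1 \<open>k1 \<le> k2\<close> isCont_critical_delay by force
  then show ?thesis
    using k1(1) by (intro that[of k]) auto
qed

lemma ex1_critical_gain:
  assumes "T \<in> delay_dom a"
  shows "\<exists>!k. \<bar>a\<bar> < k \<and> T * sqrt (k^2 - a^2) = arccos (a / k)"
proof -
  obtain k where "\<bar>a\<bar> < k" "critical_delay a k = T"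
    using exists_critical_delay_eq[OF assms] .
  then show ?thesis
    using critical_delay_eq_iff critical_delay_inj by metis
qed

lemma ku_gt_abs: "T \<in> delay_dom a \<Longrightarrow> \<bar>a\<bar> < ku a T"
  and critical_delay_ku: "T \<in> delay_dom a \<Longrightarrow> critical_delay a (ku a T) = T"
  using theI'[OF ex1_critical_gain, of T a] critical_delay_eq_iff[of a "ku a T" T]
  by (auto simp: ku_def[symmetric])

lemma ku_less_iff:
  assumes "T \<in> delay_dom a" "\<bar>a\<bar> < k"
  shows "ku a T < k \<longleftrightarrow> critical_delay a k < T"
  using assms ku_gt_abs[OF assms(1)] critical_delay_ku[OF assms(1)]
    critical_delay_strict_decreasing[of a "ku a T" k] critical_delay_strict_decreasing[of a k "ku a T"]
  by (cases k "ku a T" rule: linorder_cases) auto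

lemma ku_strict_decreasing:
  assumes "T1 \<in> delay_dom a" "T2 \<in> delay_dom a" "T1 < T2"
  shows "ku a T2 < ku a T1"
  using assms ku_less_iff[OF assms(2) ku_gt_abs[OF assms(1)]] critical_delay_ku by simp

lemma convex_on_ku: "convex_on (delay_dom a) (ku a)"
proof (rule convex_on_inverse_of_strict_antimono)
  show "strict_antimono_on {\<bar>a\<bar><..} (critical_delay a)"
    by (intro monotone_onI critical_delay_strict_decreasing) auto
qed (auto simp: convex_delay_dom convex_on_critical_delay ku_gt_abs critical_delay_ku)

section \<open>Limits of the critical gain\<close>

lemma eventually_delay_dom_at_right_0: "eventually (\<lambda>T. T \<in> delay_dom a) (at_right 0)"
proof (cases "0 < a")
  case True
  then show ?thesis
    using eventually_at_right_real[of 0 "1 / a"] by (simp add: delay_dom_eq)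
next
  case False
  then show ?thesis
    using eventually_at_right_less[of 0] by (simp add: delay_dom_eq)
qed

lemma ku_at_right_0: "filterlim (ku a) at_top (at_right 0)"
  unfolding filterlim_at_top
proof
  fix Z :: real
  define k where "k = max Z \<bar>a\<bar> + 1"
  have k: "\<bar>a\<bar> < k"
    by (simp add: k_def)
  have "eventually (\<lambda>T. T \<in> {0<..<critical_delay a k}) (at_right 0)"
    by (rule eventually_at_right_real[OF critical_delay_pos[OF k]])
  with eventually_delay_dom_at_right_0[of a] show "eventually (\<lambda>T. Z \<le> ku a T) (at_right 0)"
  proof eventually_elim
    case (elim T)
    then have "k \<le> ku a T"
      using ku_less_iff[OF elim(1) k] by auto
    then show ?case
      by (simp add: k_def)
  qed
qed

lemma ku_at_left_inverse:
  assumes "0 < a"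
  shows "(ku a \<longlongrightarrow> a) (at_left (1 / a))"
  unfolding tendsto_iff
proof (intro allI impI)
  fix e :: real
  assume "0 < e"
  define k where "k = a + e"
  have k: "\<bar>a\<bar> < k"
    using assms \<open>0 < e\<close> by (simp add: k_def)
  have "critical_delay a k < 1 / a"
    using critical_delay_less_inverse assms k by simp
  then have "eventually (\<lambda>T. T \<in> {critical_delay a k<..<1 / a}) (at_left (1 / a))"
    by (rule eventually_at_left_real)
  then show "eventually (\<lambda>T. dist (ku a T) a < e) (at_left (1 / a))"
  proof eventually_elim
    case (elim T)
    then have "T \<in> delay_dom a"
      using critical_delay_pos[OF k] assms by (auto simp: delay_dom_eq)
    then show ?case
      using elim ku_less_iff[OF \<open>T \<in> delay_dom a\<close> k] ku_gt_abs[of T a] assms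
      by (auto simp: k_def dist_real_def)
  qed
qed

lemma ku_at_top:
  assumes "a < 0"
  shows "(ku a \<longlongrightarrow> \<bar>a\<bar>) at_top"
  unfolding tendsto_iff
proof (intro allI impI)
  fix e :: real
  assume "0 < e"
  define k where "k = \<bar>a\<bar> + e"
  have k: "\<bar>a\<bar> < k"
    using \<open>0 < e\<close> by (simp add: k_def)
  show "eventually (\<lambda>T. dist (ku a T) \<bar>a\<bar> < e) at_top"
    using eventually_gt_at_top[of "critical_delay a k"]
  proof eventually_elim
    case (elim T)
    then have "T \<in> delay_dom a"
      using critical_delay_pos[OF k] assms by (auto simp: delay_dom_eq)
    then show ?case
      using elim ku_less_iff[OF \<open>T \<in> delay_dom a\<close> k] ku_gt_abs[of T a]
      by (auto simp: k_def dist_real_def)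
  qed
qed

theorem proposition2:
  fixes a :: real
  shows "(\<forall>T\<in>delay_dom a. \<exists>!k. \<bar>a\<bar> < k \<and> T * sqrt (k^2 - a^2) = arccos (a / k))
    \<and> (\<forall>T1\<in>delay_dom a. \<forall>T2\<in>delay_dom a. T1 < T2 \<longrightarrow> ku a T2 < ku a T1)
    \<and> convex_on (delay_dom a) (ku a)
    \<and> (a > 0 \<longrightarrow> ((ku a \<longlongrightarrow> a) (at_left (1 / a))
                     \<and> filterlim (ku a) at_top (at_right 0)))
    \<and> (a < 0 \<longrightarrow> ((ku a \<longlongrightarrow> \<bar>a\<bar>) at_top
                     \<and> filterlim (ku a) at_top (at_right 0)))"
  using ex1_critical_gain ku_strict_decreasing convex_on_ku ku_at_left_inverse ku_at_right_0 ku_at_top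
  by blast

end
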